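(* $\mathsf{AP}(R_4,R_4)=\mathsf{AP}(R_4,R_5)=\mathsf{AP}(R_5,R_4)=\mathsf{AP}(R_4,R_1)=\mathsf{AP}(R_5,R_1)=\mathsf{L}$.
   Context: Tuples in $\{0,1\}^4$ are written as strings $abcd$. The relations $R_1,\dots,R_5\subseteq\{0,1\}^4$ are $R_1=\{0000,1000,0100,1100,1010,0110,1001,0101,0011,1011,0111,1111\}$, $R_2=\{0000,1000,0100,1100,1010,0101,0011,1111\}$, $R_3=\{0000,1100,1010,0101,0011,1011,0111,1111\}$, $R_4=\{0000,1100,1010,0101,0011,1111\}$, $R_5=\{0000,1100,1010,0110,1001,0101,0011,1111\}$. For $R,S\subseteq\{0,1\}^4$, a Boolean function $f\colon\{0,1\}^n\to\{0,1\}$ is analogy-preserving relative to $(R,S)$ if for all $\mathbf{a},\mathbf{b},\mathbf{c},\mathbf{d}\in\{0,1\}^n$ with $(a_i,b_i,c_i,d_i)\in R$ for every $i$ and such that $(f(\mathbf{a}),f(\mathbf{b}),f(\mathbf{c}),x)\in S$ for some $x\in\{0,1\}$, we have $(f(\mathbf{a}),f(\mathbf{b}),f(\mathbf{c}),f(\mathbf{d}))\in S$; $\mathsf{AP}(R,S)$ is the set of all such functions of all arities. $\mathsf{L}$ is the set of affine Boolean functions $f(x_1,\dots,x_n)=c+a_1x_1+\dots+a_nx_n\pmod 2$ with $c,a_i\in\{0,1\}$. *)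

theory Defs
  imports Main
begin

type_synonym tup4 = "bool \<times> bool \<times> bool \<times> bool"

definition R1 :: "tup4 set" where
  "R1 = {(False,False,False,False),(True,False,False,False),(False,True,False,False),
         (True,True,False,False),(True,False,True,False),(False,True,True,False),
         (True,False,False,True),(False,True,False,True),(False,False,True,True),
         (True,False,True,True),(False,True,True,True),(True,True,True,True)}"

definition R2 :: "tup4 set" where
  "R2 = {(False,False,False,False),(True,False,False,False),(False,True,False,False),
         (True,True,False,False),(True,False,True,False),(False,True,False,True),
         (False,False,True,True),(True,True,True,True)}"

definition R3 :: "tup4 set" where
  "R3 = {(False,False,False,False),(True,True,False,False),(True,False,True,False),
         (False,True,False,True),(False,False,True,True),(True,False,True,True),
         (False,True,True,True),(True,True,True,True)}"

definition R4 :: "tup4 set" where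
  "R4 = {(False,False,False,False),(True,True,False,False),(True,False,True,False),
         (False,True,False,True),(False,False,True,True),(True,True,True,True)}"

definition R5 :: "tup4 set" where
  "R5 = {(False,False,False,False),(True,True,False,False),(True,False,True,False),
         (False,True,True,False),(True,False,False,True),(False,True,False,True),
         (False,False,True,True),(True,True,True,True)}"

text \<open>An n-ary Boolean function is modelled as f :: bool list => bool, of which only
  the values on lists of length n matter.\<close>

definition analogy_preserving :: "nat \<Rightarrow> tup4 set \<Rightarrow> tup4 set \<Rightarrow> (bool list \<Rightarrow> bool) \<Rightarrow> bool" where
  "analogy_preserving n R S f \<longleftrightarrow>
     (\<forall>a b c d. length a = n \<longrightarrow> length b = n \<longrightarrow> length c = n \<longrightarrow> length d = n \<longrightarrow>
        (\<forall>i<n. (a!i, b!i, c!i, d!i) \<in> R) \<longrightarrow>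
        (\<exists>x. (f a, f b, f c, x) \<in> S) \<longrightarrow>
        (f a, f b, f c, f d) \<in> S)"

definition affine_fun :: "nat \<Rightarrow> (bool list \<Rightarrow> bool) \<Rightarrow> bool" where
  "affine_fun n f \<longleftrightarrow>
     (\<exists>(c::nat) (co::nat \<Rightarrow> nat). c \<le> 1 \<and> (\<forall>i<n. co i \<le> 1) \<and>
        (\<forall>x. length x = n \<longrightarrow>
           f x = odd (c + (\<Sum>i<n. co i * (if x!i then 1 else 0)))))"

end

theory Submission
  imports Defs
begin

text \<open>
  R5 consists of the tuples with an even number of ones, i.e. those with
  (a = b) = (c = d), and R4 \<subseteq> R5 \<subseteq> R1. Affine functions preserve this parity
  relation coordinatewise, so they are analogy-preserving whenever the premise
  relation lies in R5 and the target relation is comparable with R5.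
  Conversely, since R4 is invariant under swapping its two halves, an
  analogy-preserving f for R4 sends R4-related columns to R5-related values;
  applied to the columns (x restricted to the first m coordinates, x restricted
  to the first m+1 coordinates, 0, e_m) this shows that switching on coordinate m
  changes f exactly when it changes f at 0, so f is affine.
\<close>

lemma R5_eq: "R5 = {(a, b, c, d). (a = b) = (c = d)}"
proof (intro set_eqI)
  fix t :: tup4
  show "t \<in> R5 \<longleftrightarrow> t \<in> {(a, b, c, d). (a = b) = (c = d)}"
    by (cases t) (auto simp: R5_def)
qed

lemma R4_subset_R5: "R4 \<subseteq> R5"
  unfolding R4_def R5_def by auto

lemma R5_subset_R1: "R5 \<subseteq> R1"
  unfolding R5_def R1_def by auto

lemma R4_swap_halves: "(a, b, c, d) \<in> R4 \<Longrightarrow> (c, d, a, b) \<in> R4"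
  unfolding R4_def by auto

definition rel_preserving :: "nat \<Rightarrow> tup4 set \<Rightarrow> tup4 set \<Rightarrow> (bool list \<Rightarrow> bool) \<Rightarrow> bool" where
  "rel_preserving n R S f \<longleftrightarrow>
     (\<forall>a b c d. length a = n \<longrightarrow> length b = n \<longrightarrow> length c = n \<longrightarrow> length d = n \<longrightarrow>
        (\<forall>i<n. (a!i, b!i, c!i, d!i) \<in> R) \<longrightarrow> (f a, f b, f c, f d) \<in> S)"

lemma analogy_preservingD:
  assumes "analogy_preserving n R S f"
    and "length a = n" "length b = n" "length c = n" "length d = n"
    and "\<forall>i<n. (a!i, b!i, c!i, d!i) \<in> R" "(f a, f b, f c, x) \<in> S"
  shows "(f a, f b, f c, f d) \<in> S"
  using assms unfolding analogy_preserving_def by blast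

lemma analogy_preserving_antimono:
  "R \<subseteq> R' \<Longrightarrow> analogy_preserving n R' S f \<Longrightarrow> analogy_preserving n R S f"
  unfolding analogy_preserving_def by blast

lemma rel_preservingD:
  assumes "rel_preserving n R S f"
    and "length a = n" "length b = n" "length c = n" "length d = n"
    and "\<forall>i<n. (a!i, b!i, c!i, d!i) \<in> R"
  shows "(f a, f b, f c, f d) \<in> S"
  using assms unfolding rel_preserving_def by simp

lemma rel_preserving_antimono:
  "R \<subseteq> R' \<Longrightarrow> rel_preserving n R' S f \<Longrightarrow> rel_preserving n R S f"
  unfolding rel_preserving_def by blast

lemma mem_if_solvable_and_R5:
  assumes "S \<subseteq> R5 \<or> R5 \<subseteq> S" "(p, q, r, s) \<in> R5" "(p, q, r, x) \<in> S"
  shows "(p, q, r, s) \<in> S"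
  using assms(1)
proof
  assume "S \<subseteq> R5"
  then have "x = s"
    using assms(2,3) unfolding R5_eq by auto
  with assms(3) show ?thesis by simp
next
  assume "R5 \<subseteq> S"
  with assms(2) show ?thesis by blast
qed

lemma analogy_preserving_if_rel_preserving_R5:
  assumes "rel_preserving n R R5 f" "S \<subseteq> R5 \<or> R5 \<subseteq> S"
  shows "analogy_preserving n R S f"
  unfolding analogy_preserving_def
proof (intro allI impI)
  fix a b c d :: "bool list"
  assume len: "length a = n" "length b = n" "length c = n" "length d = n"
    and cols: "\<forall>i<n. (a!i, b!i, c!i, d!i) \<in> R"
    and "\<exists>x. (f a, f b, f c, x) \<in> S"
  then obtain x where "(f a, f b, f c, x) \<in> S" by blast
  with assms(2) rel_preservingD[OF assms(1) len cols]
  show "(f a, f b, f c, f d) \<in> S"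
    by (rule mem_if_solvable_and_R5)
qed

lemma R5_if_both_halves_preserved:
  assumes "S \<in> {R4, R5, R1}"
    and "(\<exists>x. (p, q, r, x) \<in> S) \<longrightarrow> (p, q, r, s) \<in> S"
    and "(\<exists>x. (r, s, p, x) \<in> S) \<longrightarrow> (r, s, p, q) \<in> S"
  shows "(p, q, r, s) \<in> R5"
  using assms by (cases p; cases q; cases r; cases s; auto simp: R1_def R4_def R5_def)

lemma rel_preserving_R4_R5_if_analogy_preserving:
  assumes ap: "analogy_preserving n R4 S f" and S: "S \<in> {R4, R5, R1}"
  shows "rel_preserving n R4 R5 f"
  unfolding rel_preserving_def
proof (intro allI impI)
  fix a b c d :: "bool list"
  assume len: "length a = n" "length b = n" "length c = n" "length d = n"
    and cols: "\<forall>i<n. (a!i, b!i, c!i, d!i) \<in> R4"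
  then have cols_swapped: "\<forall>i<n. (c!i, d!i, a!i, b!i) \<in> R4"
    using R4_swap_halves by blast
  show "(f a, f b, f c, f d) \<in> R5"
  proof (rule R5_if_both_halves_preserved[OF S])
    show "(\<exists>x. (f a, f b, f c, x) \<in> S) \<longrightarrow> (f a, f b, f c, f d) \<in> S"
      using analogy_preservingD[OF ap len cols] by blast
    show "(\<exists>x. (f c, f d, f a, x) \<in> S) \<longrightarrow> (f c, f d, f a, f b) \<in> S"
      using analogy_preservingD[OF ap len(3,4,1,2) cols_swapped] by blast
  qed
qed

definition truncate_at :: "nat \<Rightarrow> bool list \<Rightarrow> bool list" where
  "truncate_at m x = map (\<lambda>j. x!j \<and> j < m) [0..<length x]"

definition unit_vec :: "nat \<Rightarrow> nat \<Rightarrow> bool list" where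
  "unit_vec n m = map (\<lambda>j. j = m) [0..<n]"

lemma affine_if_rel_preserving_R4_R5:
  assumes pres: "rel_preserving n R4 R5 f"
  shows "affine_fun n f"
proof -
  define zero where "zero = replicate n False"
  define c :: nat where "c = of_bool (f zero)"
  define co :: "nat \<Rightarrow> nat" where "co i = of_bool (f (unit_vec n i) \<noteq> f zero)" for i
  have step: "(f (truncate_at m x) = f (truncate_at (Suc m) x)) = (f zero = f (unit_vec n m))"
    if "length x = n" "m < n" "x!m" for x m
  proof -
    have "\<forall>i<n. (truncate_at m x ! i, truncate_at (Suc m) x ! i, zero ! i, unit_vec n m ! i) \<in> R4"
      using that by (auto simp: truncate_at_def unit_vec_def zero_def R4_def less_Suc_eq)
    then have "(f (truncate_at m x), f (truncate_at (Suc m) x), f zero, f (unit_vec n m)) \<in> R5"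
      using that(1) by (intro rel_preservingD[OF pres]) (simp_all add: truncate_at_def unit_vec_def zero_def)
    then show ?thesis
      unfolding R5_eq by simp
  qed
  have prefix: "f (truncate_at m x) = odd (c + (\<Sum>i<m. co i * (if x!i then 1 else 0)))"
    if "length x = n" "m \<le> n" for x m
    using that(2)
  proof (induction m)
    case 0
    have "truncate_at 0 x = zero"
      using that(1) by (simp add: truncate_at_def zero_def map_replicate_const)
    then show ?case by (simp add: c_def)
  next
    case (Suc m)
    show ?case
    proof (cases "x!m")
      case False
      then have "truncate_at (Suc m) x = truncate_at m x"
        by (auto simp: truncate_at_def less_Suc_eq)
      with Suc False show ?thesis by simp
    next
      case True
      with Suc step[OF that(1), of m] show ?thesis by (auto simp: co_def)
    qed
  qed
  have "truncate_at n x = x" if "length x = n" for x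
    using that by (auto simp: truncate_at_def intro: nth_equalityI)
  with prefix have "f x = odd (c + (\<Sum>i<n. co i * (if x!i then 1 else 0)))"
    if "length x = n" for x
    using that by (metis order_refl)
  moreover have "c \<le> 1" "\<forall>i<n. co i \<le> 1"
    by (auto simp: c_def co_def)
  ultimately show ?thesis
    unfolding affine_fun_def by (intro exI[of _ c] exI[of _ co]) blast
qed

lemma rel_preserving_R5_if_affine:
  assumes "affine_fun n f"
  shows "rel_preserving n R5 R5 f"
  unfolding rel_preserving_def
proof (intro allI impI)
  fix a b c d :: "bool list"
  assume len: "length a = n" "length b = n" "length c = n" "length d = n"
    and cols: "\<forall>i<n. (a!i, b!i, c!i, d!i) \<in> R5"
  obtain k :: nat and co :: "nat \<Rightarrow> nat" where
    f: "\<And>x. length x = n \<Longrightarrow> f x = odd (k + (\<Sum>i<n. co i * of_bool (x!i)))"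
    using assms unfolding affine_fun_def of_bool_def by blast
  define g where "g x = k + (\<Sum>i<n. co i * of_bool (x!i))" for x
  have "even (of_bool (a!i) + of_bool (b!i) + of_bool (c!i) + of_bool (d!i) :: nat)"
    if "i < n" for i
    using cols that unfolding R5_eq
    by (cases "a!i"; cases "b!i"; cases "c!i"; cases "d!i"; auto)
  then have "even (\<Sum>i<n. co i * (of_bool (a!i) + of_bool (b!i) + of_bool (c!i) + of_bool (d!i)))"
    by (auto intro!: dvd_sum)
  then have "even (g a + g b + g c + g d)"
    by (simp add: g_def algebra_simps sum.distrib)
  then have "(odd (g a) = odd (g b)) = (odd (g c) = odd (g d))"
    by auto
  then show "(f a, f b, f c, f d) \<in> R5"
    unfolding R5_eq by (simp add: f len g_def)
qed

lemma analogy_preserving_iff_affine: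
  assumes R: "R \<in> {R4, R5}" and S: "S \<in> {R4, R5, R1}"
  shows "analogy_preserving n R S f \<longleftrightarrow> affine_fun n f"
proof
  assume "analogy_preserving n R S f"
  moreover have "R4 \<subseteq> R"
    using R R4_subset_R5 by auto
  ultimately have "analogy_preserving n R4 S f"
    by (rule analogy_preserving_antimono[rotated])
  then show "affine_fun n f"
    by (intro affine_if_rel_preserving_R4_R5 rel_preserving_R4_R5_if_analogy_preserving[OF _ S])
next
  assume "affine_fun n f"
  moreover have "R \<subseteq> R5"
    using R R4_subset_R5 by auto
  ultimately have "rel_preserving n R R5 f"
    by (intro rel_preserving_antimono[of R R5] rel_preserving_R5_if_affine)
  moreover have "S \<subseteq> R5 \<or> R5 \<subseteq> S"
    using S R4_subset_R5 R5_subset_R1 by auto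
  ultimately show "analogy_preserving n R S f"
    by (rule analogy_preserving_if_rel_preserving_R5)
qed

theorem mainTheorem11:
  shows "\<forall>n f. (analogy_preserving n R4 R4 f \<longleftrightarrow> affine_fun n f)
              \<and> (analogy_preserving n R4 R5 f \<longleftrightarrow> affine_fun n f)
              \<and> (analogy_preserving n R5 R4 f \<longleftrightarrow> affine_fun n f)
              \<and> (analogy_preserving n R4 R1 f \<longleftrightarrow> affine_fun n f)
              \<and> (analogy_preserving n R5 R1 f \<longleftrightarrow> affine_fun n f)"
  by (intro allI conjI analogy_preserving_iff_affine insertI1 insertI2)

end
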